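(* Let $\mathcal{CL}=\{\ell_1,\dots,\ell_n,C_1,\dots,C_k\}\subset\mathbb{P}^2_{\mathbb{C}}$ be a conic-line arrangement with $n\geq 3$ and $k\geq 3$ such that $t_{n+k}=0$. Then the Levi graph $H$ of $\mathcal{CL}$ contains an induced cycle of length $6$.
   Context: A conic-line arrangement $\mathcal{CL}=\{\ell_1,\dots,\ell_n,C_1,\dots,C_k\}$ is an arrangement of $n$ lines and $k$ smooth conics in $\mathbb{P}^2_{\mathbb{C}}$ having only ordinary singularities, i.e. every intersection point looks locally like $\{x^a=y^a\}$ for some integer $a\geq 2$. For $r\geq 2$, $t_r$ denotes the number of points of $\mathrm{Sing}(\mathcal{CL})$ lying on exactly $r$ curves of $\mathcal{CL}$; thus $t_{n+k}=0$ means no point lies on all curves. The Levi graph $H$ is the bipartite graph with one vertex for each point $p\in\mathrm{Sing}(\mathcal{CL})$, one vertex for each line and each conic, and an edge between the vertex of $p$ and the vertex of a curve iff $p$ lies on that curve. *)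

theory Defs
  imports "HOL-Analysis.Analysis"
begin

text \<open>Points of the complex projective plane are represented by nonzero vectors of
  complex^3 (homogeneous coordinates); the projective point of p is the class pt p.
  A line is given by a nonzero coefficient vector a (equation a0 x + a1 y + a2 z = 0);
  a conic by a symmetric 3x3 matrix Q (equation p^T Q p = 0), smooth iff det Q is nonzero.
  Curves of the arrangement are indexed by Inl i (line i, i < n) and Inr j (conic j, j < k).\<close>

definition pt :: "complex^3 \<Rightarrow> (complex^3) set" where
  "pt p = {c *s p | c. c \<noteq> 0}"

definition proportional :: "complex^3 \<Rightarrow> complex^3 \<Rightarrow> bool" where
  "proportional u w \<longleftrightarrow> (\<exists>c. c \<noteq> 0 \<and> u = c *s w)"

definition curves :: "nat \<Rightarrow> nat \<Rightarrow> (nat + nat) set" where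
  "curves n k = Inl ` {..<n} \<union> Inr ` {..<k}"

definition on_curve :: "(nat \<Rightarrow> complex^3) \<Rightarrow> (nat \<Rightarrow> complex^3^3) \<Rightarrow> nat + nat \<Rightarrow> complex^3 \<Rightarrow> bool" where
  "on_curve L C c p = (case c of
      Inl i \<Rightarrow> (\<Sum>j\<in>UNIV. L i $ j * p $ j) = 0
    | Inr i \<Rightarrow> (\<Sum>j\<in>UNIV. p $ j * (C i *v p) $ j) = 0)"

definition tangent :: "(nat \<Rightarrow> complex^3) \<Rightarrow> (nat \<Rightarrow> complex^3^3) \<Rightarrow> nat + nat \<Rightarrow> complex^3 \<Rightarrow> complex^3" where
  "tangent L C c p = (case c of Inl i \<Rightarrow> L i | Inr i \<Rightarrow> C i *v p)"

text \<open>Conic-line arrangement: distinct lines, distinct smooth conics, and only ordinary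
  singularities, i.e. (all curves being smooth) any two curves through a common point
  meet transversally there (pairwise distinct tangent lines).\<close>
definition conic_line_arrangement :: "nat \<Rightarrow> nat \<Rightarrow> (nat \<Rightarrow> complex^3) \<Rightarrow> (nat \<Rightarrow> complex^3^3) \<Rightarrow> bool" where
  "conic_line_arrangement n k L C \<longleftrightarrow>
     (\<forall>i<n. L i \<noteq> 0) \<and>
     (\<forall>i<n. \<forall>i'<n. i \<noteq> i' \<longrightarrow> \<not> proportional (L i) (L i')) \<and>
     (\<forall>j<k. transpose (C j) = C j \<and> det (C j) \<noteq> 0) \<and>
     (\<forall>j<k. \<forall>j'<k. j \<noteq> j' \<longrightarrow> (\<nexists>c. c \<noteq> 0 \<and> C j = (\<chi> a b. c * C j' $ a $ b))) \<and>
     (\<forall>p. p \<noteq> 0 \<longrightarrow> (\<forall>c\<in>curves n k. \<forall>c'\<in>curves n k.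
        c \<noteq> c' \<and> on_curve L C c p \<and> on_curve L C c' p \<longrightarrow>
        \<not> proportional (tangent L C c p) (tangent L C c' p)))"

definition mult_at :: "nat \<Rightarrow> nat \<Rightarrow> (nat \<Rightarrow> complex^3) \<Rightarrow> (nat \<Rightarrow> complex^3^3) \<Rightarrow> complex^3 \<Rightarrow> nat" where
  "mult_at n k L C p = card {c \<in> curves n k. on_curve L C c p}"

definition sing_points :: "nat \<Rightarrow> nat \<Rightarrow> (nat \<Rightarrow> complex^3) \<Rightarrow> (nat \<Rightarrow> complex^3^3) \<Rightarrow> (complex^3) set set" where
  "sing_points n k L C = pt ` {p. p \<noteq> 0 \<and> 2 \<le> mult_at n k L C p}"

definition t_num :: "nat \<Rightarrow> nat \<Rightarrow> (nat \<Rightarrow> complex^3) \<Rightarrow> (nat \<Rightarrow> complex^3^3) \<Rightarrow> nat \<Rightarrow> nat" where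
  "t_num n k L C r = card (pt ` {p. p \<noteq> 0 \<and> 2 \<le> mult_at n k L C p \<and> mult_at n k L C p = r})"

definition levi_vertices :: "nat \<Rightarrow> nat \<Rightarrow> (nat \<Rightarrow> complex^3) \<Rightarrow> (nat \<Rightarrow> complex^3^3) \<Rightarrow> ((complex^3) set + (nat + nat)) set" where
  "levi_vertices n k L C = Inl ` sing_points n k L C \<union> Inr ` curves n k"

definition levi_adj :: "(nat \<Rightarrow> complex^3) \<Rightarrow> (nat \<Rightarrow> complex^3^3) \<Rightarrow> (complex^3) set + (nat + nat) \<Rightarrow> (complex^3) set + (nat + nat) \<Rightarrow> bool" where
  "levi_adj L C x y \<longleftrightarrow> (\<exists>P c. ((x = Inl P \<and> y = Inr c) \<or> (x = Inr c \<and> y = Inl P)) \<and>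
       (\<exists>p\<in>P. on_curve L C c p))"

definition induced_cycle :: "'v set \<Rightarrow> ('v \<Rightarrow> 'v \<Rightarrow> bool) \<Rightarrow> 'v list \<Rightarrow> bool" where
  "induced_cycle V E vs \<longleftrightarrow> 3 \<le> length vs \<and> distinct vs \<and> set vs \<subseteq> V \<and>
     (\<forall>i<length vs. \<forall>j<length vs.
        E (vs ! i) (vs ! j) \<longleftrightarrow> (j = Suc i mod length vs \<or> i = Suc j mod length vs))"

end

theory Submission
  imports Defs
begin

text \<open>Take two lines \<open>\<ell>\<^sub>0, \<ell>\<^sub>1\<close> of the arrangement and their intersection point \<open>O\<close>.
  Since \<open>t\<^sub>n\<^sub>+\<^sub>k = 0\<close>, some curve \<open>D\<close> misses \<open>O\<close>. If \<open>D\<close> is a line, the three lines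
  are not concurrent and form a triangle. If \<open>D\<close> is a conic, it meets \<open>\<ell>\<^sub>0\<close> in a point
  \<open>p\<close> and \<open>\<ell>\<^sub>1\<close> in a point \<open>q\<close>, and neither lies on the other line because the only common
  point of the two lines is \<open>O \<notin> D\<close>. In both cases three curves meet pairwise in three
  distinct points, none of which lies on the third curve, and these six vertices span an
  induced hexagon of the Levi graph. Only two of the lines and \<open>t\<^sub>n\<^sub>+\<^sub>k = 0\<close> are
  needed.\<close>

definition lin_form :: "complex^3 \<Rightarrow> complex^3 \<Rightarrow> complex" where
  "lin_form a p = (\<Sum>j\<in>UNIV. a $ j * p $ j)"

definition quad_form :: "complex^3^3 \<Rightarrow> complex^3 \<Rightarrow> complex" where
  "quad_form Q p = (\<Sum>j\<in>UNIV. p $ j * (Q *v p) $ j)"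

definition cross :: "complex^3 \<Rightarrow> complex^3 \<Rightarrow> complex^3" where
  "cross a b = vector [a$2 * b$3 - a$3 * b$2, a$3 * b$1 - a$1 * b$3, a$1 * b$2 - a$2 * b$1]"

lemma lin_form_3: "lin_form a p = a$1 * p$1 + a$2 * p$2 + a$3 * p$3"
  by (simp add: lin_form_def sum_3)

lemma lin_form_add_scale: "lin_form a (s *s u + t *s v) = s * lin_form a u + t * lin_form a v"
  unfolding lin_form_3 by (simp add: algebra_simps)

lemma lin_form_scale: "lin_form a (c *s p) = c * lin_form a p"
  using lin_form_add_scale[of a c p 0 0] by simp

lemma quad_form_add_scale:
  "quad_form Q (s *s u + t *s v) =
     s^2 * quad_form Q u + s * t * (quad_form Q (u + v) - quad_form Q u - quad_form Q v)
     + t^2 * quad_form Q v"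
  unfolding quad_form_def sum_3 matrix_vector_mult_def by (simp add: algebra_simps power2_eq_square)

lemma quad_form_scale: "quad_form Q (c *s p) = c^2 * quad_form Q p"
  using quad_form_add_scale[of Q c p 0 0] by simp

lemma lin_form_cross_left: "lin_form a (cross a b) = 0"
  and lin_form_cross_right: "lin_form b (cross a b) = 0"
  unfolding cross_def lin_form_3 by (simp_all add: algebra_simps)

lemma lin_form_cross_cyclic: "lin_form a (cross b d) = lin_form d (cross a b)"
  unfolding cross_def lin_form_3 by (simp add: algebra_simps)

lemma lin_form_cross_swap: "lin_form a (cross b d) = - lin_form a (cross d b)"
  unfolding cross_def lin_form_3 by (simp add: algebra_simps)

lemma cross_cross: "cross (cross a b) p = lin_form a p *s b - lin_form b p *s a"
  unfolding cross_def lin_form_3 vec_eq_iff forall_3 by (simp add: algebra_simps)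

lemma cross_eq_0_imp_multiple:
  assumes "cross a b = 0" "a \<noteq> 0"
  shows "\<exists>c. b = c *s a"
proof -
  have eqs: "a$2 * b$3 = a$3 * b$2" "a$3 * b$1 = a$1 * b$3" "a$1 * b$2 = a$2 * b$1"
    using assms(1) unfolding cross_def vec_eq_iff forall_3 by auto
  obtain i where "a $ i \<noteq> 0" using assms(2) by (auto simp: vec_eq_iff)
  then have "b = (b $ i / a $ i) *s a"
    using eqs exhaust_3[of i] unfolding vec_eq_iff forall_3 by (auto simp: field_simps)
  then show ?thesis ..
qed

lemma cross_nonzero:
  assumes "a \<noteq> 0" "b \<noteq> 0" "\<not> proportional b a"
  shows "cross a b \<noteq> 0"
proof
  assume "cross a b = 0"
  then obtain c where "b = c *s a" using cross_eq_0_imp_multiple assms(1) by blast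
  with assms show False unfolding proportional_def by (cases "c = 0") auto
qed

lemma common_zero_multiple_cross:
  assumes "a \<noteq> 0" "b \<noteq> 0" "\<not> proportional b a" "lin_form a p = 0" "lin_form b p = 0"
  shows "\<exists>c. p = c *s cross a b"
  using cross_eq_0_imp_multiple[of "cross a b" p] cross_cross[of a b p]
    cross_nonzero[OF assms(1-3)] assms(4,5)
  by simp

lemma binary_quadratic_has_zero:
  "\<exists>s t. (s, t) \<noteq> (0::complex, 0::complex) \<and> s^2 * A + s * t * B + t^2 * D = 0"
proof (cases "A = 0")
  case True
  then show ?thesis by (intro exI[of _ 1] exI[of _ 0]) simp
next
  case False
  define s where "s = (- B + csqrt (B^2 - 4 * A * D)) / (2 * A)"
  have "(2 * A * s + B)^2 = B^2 - 4 * A * D"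
    using False by (simp add: s_def field_simps)
  then have "4 * A * (s^2 * A + s * B + D) = 0"
    by (simp add: algebra_simps power2_eq_square)
  then have "s^2 * A + s * B + D = 0" using False by simp
  then show ?thesis by (intro exI[of _ s] exI[of _ 1]) simp
qed

lemma quad_form_has_zero_in_span:
  assumes "\<And>s t. s *s u + t *s v = 0 \<Longrightarrow> s = 0 \<and> t = 0"
    and "lin_form a u = 0" "lin_form a v = 0"
  shows "\<exists>p. p \<noteq> 0 \<and> lin_form a p = 0 \<and> quad_form Q p = 0"
proof -
  obtain s t where "(s, t) \<noteq> (0, 0)" and zero:
    "s^2 * quad_form Q u + s * t * (quad_form Q (u + v) - quad_form Q u - quad_form Q v)
     + t^2 * quad_form Q v = 0"
    using binary_quadratic_has_zero by blast
  then show ?thesis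
    using assms by (intro exI[of _ "s *s u + t *s v"]) (auto simp: quad_form_add_scale lin_form_add_scale)
qed

lemma quad_form_has_zero_on_line:
  assumes "a \<noteq> 0"
  shows "\<exists>p. p \<noteq> 0 \<and> lin_form a p = 0 \<and> quad_form Q p = 0"
proof -
  have "a$1 \<noteq> 0 \<or> a$2 \<noteq> 0 \<or> a$3 \<noteq> 0" using assms unfolding vec_eq_iff forall_3 by auto
  then show ?thesis
  proof (elim disjE)
    assume "a$1 \<noteq> 0"
    then show ?thesis
      by (intro quad_form_has_zero_in_span[of "vector [- a$2, a$1, 0]" "vector [- a$3, 0, a$1]"])
        (auto simp: vec_eq_iff forall_3 lin_form_3 algebra_simps)
  next
    assume "a$2 \<noteq> 0"
    then show ?thesis
      by (intro quad_form_has_zero_in_span[of "vector [a$2, - a$1, 0]" "vector [0, - a$3, a$2]"])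
        (auto simp: vec_eq_iff forall_3 lin_form_3 algebra_simps)
  next
    assume "a$3 \<noteq> 0"
    then show ?thesis
      by (intro quad_form_has_zero_in_span[of "vector [a$3, 0, - a$1]" "vector [0, a$3, - a$2]"])
        (auto simp: vec_eq_iff forall_3 lin_form_3 algebra_simps)
  qed
qed

lemma pt_scale:
  assumes "c \<noteq> 0"
  shows "pt (c *s q) = pt q"
proof -
  have "d *s (c *s q) = (d * c) *s q" "d *s q = (d / c) *s (c *s q)" for d
    using assms by (simp_all add: vector_smult_assoc)
  then show ?thesis
    unfolding pt_def using assms by (metis (no_types, opaque_lifting) divide_eq_0_iff mult_eq_0_iff)
qed

lemma pt_eq_of_common_zero:
  assumes "a \<noteq> 0" "b \<noteq> 0" "\<not> proportional b a" "q \<noteq> 0" "lin_form a q = 0" "lin_form b q = 0"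
  shows "pt q = pt (cross a b)"
proof -
  obtain c where c: "q = c *s cross a b"
    using common_zero_multiple_cross[OF assms(1-3,5,6)] by blast
  with assms(4) have "c \<noteq> 0" by auto
  with c show ?thesis by (simp add: pt_scale)
qed

lemma on_curve_Inl: "on_curve L C (Inl i) p \<longleftrightarrow> lin_form (L i) p = 0"
  by (simp add: on_curve_def lin_form_def)

lemma on_curve_Inr: "on_curve L C (Inr j) p \<longleftrightarrow> quad_form (C j) p = 0"
  by (simp add: on_curve_def quad_form_def)

lemma on_curve_scale: "x \<noteq> 0 \<Longrightarrow> on_curve L C c (x *s p) \<longleftrightarrow> on_curve L C c p"
  by (cases c) (simp_all add: on_curve_Inl on_curve_Inr lin_form_scale quad_form_scale)

lemma on_curve_zero: "on_curve L C c 0"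
  by (cases c) (simp_all add: on_curve_Inl on_curve_Inr lin_form_3 quad_form_def)

lemma levi_adj_pt_curve: "levi_adj L C (Inl (pt p)) (Inr c) \<longleftrightarrow> on_curve L C c p"
  and levi_adj_curve_pt: "levi_adj L C (Inr c) (Inl (pt p)) \<longleftrightarrow> on_curve L C c p"
  unfolding levi_adj_def pt_def using on_curve_scale by fastforce+

lemma not_levi_adj_Inl_Inl: "\<not> levi_adj L C (Inl P) (Inl Q)"
  and not_levi_adj_Inr_Inr: "\<not> levi_adj L C (Inr c) (Inr d)"
  unfolding levi_adj_def by auto

lemma finite_curves: "finite (curves n k)"
  by (simp add: curves_def)

lemma card_curves: "card (curves n k) = n + k"
  unfolding curves_def by (subst card_Un_disjoint) (auto simp: card_image)

lemma conic_line_arrangement_lines: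
  assumes "conic_line_arrangement n k L C" "i < n" "i' < n"
  shows "L i \<noteq> 0" and "i \<noteq> i' \<Longrightarrow> \<not> proportional (L i) (L i')"
proof -
  have "\<forall>i<n. L i \<noteq> 0"
    using assms(1) unfolding conic_line_arrangement_def by (rule conjunct1)
  moreover have "\<forall>i<n. \<forall>i'<n. i \<noteq> i' \<longrightarrow> \<not> proportional (L i) (L i')"
    using assms(1) unfolding conic_line_arrangement_def by (rule conjunct1[OF conjunct2])
  ultimately show "L i \<noteq> 0" and "i \<noteq> i' \<Longrightarrow> \<not> proportional (L i) (L i')"
    using assms(2,3) by auto
qed

lemma mult_at_eq_iff:
  "mult_at n k L C p = n + k \<longleftrightarrow> (\<forall>c\<in>curves n k. on_curve L C c p)"
proof -
  have "mult_at n k L C p = n + k \<longleftrightarrow> {c \<in> curves n k. on_curve L C c p} = curves n k"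
    unfolding mult_at_def card_curves[symmetric]
    using card_subset_eq[OF finite_curves, of "{c \<in> curves n k. on_curve L C c p}"] by auto
  then show ?thesis by blast
qed

lemma Inr_in_levi_vertices: "c \<in> curves n k \<Longrightarrow> Inr c \<in> levi_vertices n k L C"
  unfolding levi_vertices_def by blast

lemma Inl_pt_in_levi_vertices:
  assumes "p \<noteq> 0" "c \<in> curves n k" "c' \<in> curves n k" "c \<noteq> c'"
    and "on_curve L C c p" "on_curve L C c' p"
  shows "Inl (pt p) \<in> levi_vertices n k L C"
proof -
  have "card {c, c'} \<le> mult_at n k L C p"
    unfolding mult_at_def by (rule card_mono) (use assms finite_curves in auto)
  then have "2 \<le> mult_at n k L C p" using assms(4) by simp
  then show ?thesis using assms(1) unfolding levi_vertices_def sing_points_def by blast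
qed

text \<open>Distinctness of the curves and of the points, and nonvanishing of the points, follow
  from the incidence pattern, since the zero vector lies on every curve.\<close>
lemma levi_induced_hexagon_of_triangle:
  assumes curves: "ca \<in> curves n k" "cb \<in> curves n k" "cc \<in> curves n k"
    and ab: "on_curve L C ca pab" "on_curve L C cb pab" "\<not> on_curve L C cc pab"
    and bc: "on_curve L C cb pbc" "on_curve L C cc pbc" "\<not> on_curve L C ca pbc"
    and ac: "on_curve L C ca pac" "on_curve L C cc pac" "\<not> on_curve L C cb pac"
  shows "\<exists>vs. length vs = 6 \<and> induced_cycle (levi_vertices n k L C) (levi_adj L C) vs"
proof -
  define vs where "vs = [Inr ca, Inl (pt pab), Inr cb, Inl (pt pbc), Inr cc, Inl (pt pac)]"
  have ne: "ca \<noteq> cb" "cb \<noteq> cc" "ca \<noteq> cc"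
    using ab bc ac by metis+
  have nz: "pab \<noteq> 0" "pbc \<noteq> 0" "pac \<noteq> 0"
    using ab(3) bc(3) ac(3) on_curve_zero by metis+
  have "pt pab \<noteq> pt pbc" "pt pab \<noteq> pt pac" "pt pbc \<noteq> pt pac"
    using ab bc ac levi_adj_pt_curve by metis+
  then have "distinct vs" unfolding vs_def using ne by auto
  moreover have "set vs \<subseteq> levi_vertices n k L C"
    unfolding vs_def
    using curves Inr_in_levi_vertices
      Inl_pt_in_levi_vertices[OF nz(1) curves(1,2) ne(1) ab(1,2)]
      Inl_pt_in_levi_vertices[OF nz(2) curves(2,3) ne(2) bc(1,2)]
      Inl_pt_in_levi_vertices[OF nz(3) curves(1,3) ne(3) ac(1,2)]
    by auto
  moreover have "levi_adj L C (vs ! i) (vs ! j) \<longleftrightarrow> (j = Suc i mod 6 \<or> i = Suc j mod 6)"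
    if "i < 6" "j < 6" for i j
  proof -
    have "i = 0 \<or> i = 1 \<or> i = 2 \<or> i = 3 \<or> i = 4 \<or> i = 5"
      "j = 0 \<or> j = 1 \<or> j = 2 \<or> j = 3 \<or> j = 4 \<or> j = 5" using that by auto
    then show ?thesis
      unfolding vs_def
      by (elim disjE) (simp_all add: levi_adj_pt_curve levi_adj_curve_pt not_levi_adj_Inl_Inl
          not_levi_adj_Inr_Inr ab bc ac)
  qed
  ultimately show ?thesis
    unfolding induced_cycle_def by (intro exI[of _ vs]) (simp add: vs_def)
qed

lemma three_lines_induced_hexagon:
  assumes "i < n" "i' < n" "i'' < n" "lin_form (L i'') (cross (L i) (L i')) \<noteq> 0"
  shows "\<exists>vs. length vs = 6 \<and> induced_cycle (levi_vertices n k L C) (levi_adj L C) vs"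
proof (rule levi_induced_hexagon_of_triangle
    [where ca = "Inl i" and cb = "Inl i'" and cc = "Inl i''" and pab = "cross (L i) (L i')"
      and pbc = "cross (L i') (L i'')" and pac = "cross (L i) (L i'')"])
  show "\<not> on_curve L C (Inl i) (cross (L i') (L i''))"
    using assms(4) by (simp add: on_curve_Inl lin_form_cross_cyclic)
  show "\<not> on_curve L C (Inl i') (cross (L i) (L i''))"
    using assms(4) by (simp add: on_curve_Inl lin_form_cross_cyclic lin_form_cross_swap[of "L i'"])
qed (use assms in \<open>simp_all add: curves_def on_curve_Inl lin_form_cross_left lin_form_cross_right\<close>)

lemma two_lines_conic_induced_hexagon:
  assumes "i < n" "i' < n" "j < k" "L i \<noteq> 0" "L i' \<noteq> 0" "\<not> proportional (L i') (L i)"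
    and off_conic: "quad_form (C j) (cross (L i) (L i')) \<noteq> 0"
  shows "\<exists>vs. length vs = 6 \<and> induced_cycle (levi_vertices n k L C) (levi_adj L C) vs"
proof -
  have only_common_zero: "lin_form (L i) p = 0 \<and> lin_form (L i') p = 0 \<longleftrightarrow> False"
    if "p \<noteq> 0" "quad_form (C j) p = 0" for p
  proof -
    have "c = 0" if "p = c *s cross (L i) (L i')" for c
      using \<open>quad_form (C j) p = 0\<close> off_conic by (simp add: that quad_form_scale)
    then show ?thesis
      using common_zero_multiple_cross[OF assms(4-6), of p] \<open>p \<noteq> 0\<close> by force
  qed
  obtain p where p: "p \<noteq> 0" "lin_form (L i) p = 0" "quad_form (C j) p = 0"
    using quad_form_has_zero_on_line[OF assms(4)] by blast
  obtain q where q: "q \<noteq> 0" "lin_form (L i') q = 0" "quad_form (C j) q = 0"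
    using quad_form_has_zero_on_line[OF assms(5)] by blast
  show ?thesis
  proof (rule levi_induced_hexagon_of_triangle
      [where ca = "Inl i" and cb = "Inl i'" and cc = "Inr j"
        and pab = "cross (L i) (L i')" and pbc = q and pac = p])
  qed (use assms p q only_common_zero[OF p(1,3)] only_common_zero[OF q(1,3)] in
      \<open>simp_all add: curves_def on_curve_Inl on_curve_Inr lin_form_cross_left lin_form_cross_right\<close>)
qed

lemma exists_curve_avoiding_point:
  assumes "t_num n k L C (n + k) = 0" "2 \<le> n + k" "p \<noteq> 0"
    and unique: "\<And>q. q \<noteq> 0 \<Longrightarrow> \<forall>c\<in>curves n k. on_curve L C c q \<Longrightarrow> pt q = pt p"
  shows "\<exists>c\<in>curves n k. \<not> on_curve L C c p"
proof (rule ccontr)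
  assume "\<not> ?thesis"
  then have p_on_all: "\<forall>c\<in>curves n k. on_curve L C c p" by blast
  have "{q. q \<noteq> 0 \<and> 2 \<le> mult_at n k L C q \<and> mult_at n k L C q = n + k}
      = {q. q \<noteq> 0 \<and> (\<forall>c\<in>curves n k. on_curve L C c q)}"
    by (intro Collect_cong) (metis assms(2) mult_at_eq_iff)
  also have "pt ` \<dots> = {pt p}"
    using unique assms(3) p_on_all by blast
  finally show False using assms(1) by (simp add: t_num_def)
qed

theorem theorem5p5:
  fixes n k :: nat and L :: "nat \<Rightarrow> complex^3" and C :: "nat \<Rightarrow> complex^3^3"
  assumes "conic_line_arrangement n k L C"
    and "n \<ge> 3" and "k \<ge> 3"
    and "t_num n k L C (n + k) = 0"
  shows "\<exists>vs. length vs = 6 \<and> induced_cycle (levi_vertices n k L C) (levi_adj L C) vs"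
proof -
  have "0 < n" "1 < n" using assms(2) by auto
  then have lines: "L 0 \<noteq> 0" "L 1 \<noteq> 0" "\<not> proportional (L 1) (L 0)"
    using conic_line_arrangement_lines[OF assms(1)] by blast+
  define meet where "meet = cross (L 0) (L 1)"
  have "meet \<noteq> 0" unfolding meet_def using cross_nonzero[OF lines] .
  have "Inl 0 \<in> curves n k" "Inl 1 \<in> curves n k"
    using assms(2) by (auto simp: curves_def)
  then have "pt q = pt meet" if "q \<noteq> 0" "\<forall>c\<in>curves n k. on_curve L C c q" for q
    using pt_eq_of_common_zero[OF lines that(1)] that(2) unfolding meet_def by (metis on_curve_Inl)
  moreover have "2 \<le> n + k" using assms(2) by simp
  ultimately obtain c where c: "c \<in> curves n k" "\<not> on_curve L C c meet"
    using exists_curve_avoiding_point[OF assms(4) _ \<open>meet \<noteq> 0\<close>] by blast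
  show ?thesis
  proof (cases c)
    case (Inl i)
    with c show ?thesis
      using three_lines_induced_hexagon[of 0 n 1 i] assms(2)
      by (auto simp: curves_def on_curve_Inl meet_def)
  next
    case (Inr j)
    with c show ?thesis
      using two_lines_conic_induced_hexagon[OF _ _ _ lines, of n j k] assms(2)
      by (auto simp: curves_def on_curve_Inr meet_def)
  qed
qed

end
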